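(* Any satisfiable $d$-dim linear system $S$ has a solution $x\in\mathbb{Z}^d$ such that $\|x\|_1\leq \mathrm{lcm}(S)\cdot\left(d+\left(2+d+d^{2}\cdot\|S\|\right)^{2d+1}\right)$.
   Context: For a variable $\mathbf{x}$ ranging over $\mathbb{Z}^d$: an equality constraint is $\langle\alpha,\mathbf{x}\rangle=c$ and an inequality constraint is $\langle\alpha,\mathbf{x}\rangle\geq c$, with $\alpha\in\mathbb{Z}^d$, $c\in\mathbb{Z}$; a divisibility constraint is $\langle\alpha,\mathbf{x}\rangle\equiv c \pmod m$ with $m\in\mathbb{N}_+$, $\alpha\in[0,m-1]^d$, $c\in[0,m-1]$. A $d$-dim linear system $S$ is a propositional formula (boolean combination) whose atoms are such constraints for the fixed variable $\mathbf{x}$; its solutions are the $x\in\mathbb{Z}^d$ satisfying it, and $S$ is satisfiable if it has a solution. $\|S\|$ is the least $s\in\mathbb{N}$ with $\max\{\|\alpha\|,|c|\}\leq s$ for all equality and inequality constraints in $S$ (where $\|\alpha\|=\max_i|\alpha(i)|$), and $\mathrm{lcm}(S)$ is the least common multiple of all moduli $m$ of divisibility constraints in $S$ (equal to $1$ if there are none). $\|x\|_1=\sum_i|x(i)|$. *)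

theory Defs
  imports Main
begin

definition inner :: "int list \<Rightarrow> int list \<Rightarrow> int" where
  "inner a x = (\<Sum>i<length a. a ! i * x ! i)"

datatype constr = Eq "int list" int | Geq "int list" int | Dvd "int list" int nat

datatype lsys = Atom constr | TT | FF | Neg lsys | Conj lsys lsys | Disj lsys lsys

fun atoms :: "lsys \<Rightarrow> constr set" where
  "atoms (Atom a) = {a}"
| "atoms TT = {}"
| "atoms FF = {}"
| "atoms (Neg p) = atoms p"
| "atoms (Conj p q) = atoms p \<union> atoms q"
| "atoms (Disj p q) = atoms p \<union> atoms q"

fun constr_wf :: "nat \<Rightarrow> constr \<Rightarrow> bool" where
  "constr_wf d (Eq a c) = (length a = d)"
| "constr_wf d (Geq a c) = (length a = d)"
| "constr_wf d (Dvd a c m) = (length a = d \<and> m > 0 \<and> (\<forall>i<d. 0 \<le> a ! i \<and> a ! i < int m)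
                              \<and> 0 \<le> c \<and> c < int m)"

definition linsys :: "nat \<Rightarrow> lsys \<Rightarrow> bool" where
  "linsys d S = (\<forall>a\<in>atoms S. constr_wf d a)"

fun csat :: "constr \<Rightarrow> int list \<Rightarrow> bool" where
  "csat (Eq a c) x = (inner a x = c)"
| "csat (Geq a c) x = (inner a x \<ge> c)"
| "csat (Dvd a c m) x = ((inner a x) mod (int m) = c mod (int m))"

fun holds :: "lsys \<Rightarrow> int list \<Rightarrow> bool" where
  "holds (Atom a) x = csat a x"
| "holds TT x = True"
| "holds FF x = False"
| "holds (Neg p) x = (\<not> holds p x)"
| "holds (Conj p q) x = (holds p x \<and> holds q x)"
| "holds (Disj p q) x = (holds p x \<or> holds q x)"

definition is_solution :: "nat \<Rightarrow> lsys \<Rightarrow> int list \<Rightarrow> bool" where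
  "is_solution d S x = (length x = d \<and> holds S x)"

definition satisfiable :: "nat \<Rightarrow> lsys \<Rightarrow> bool" where
  "satisfiable d S = (\<exists>x. is_solution d S x)"

definition vnorm :: "int list \<Rightarrow> nat" where
  "vnorm a = Max (insert 0 (set (map (\<lambda>v. nat \<bar>v\<bar>) a)))"

definition norm1 :: "int list \<Rightarrow> nat" where
  "norm1 x = (\<Sum>v\<leftarrow>x. nat \<bar>v\<bar>)"

fun cbound :: "constr \<Rightarrow> nat \<Rightarrow> bool" where
  "cbound (Eq a c) s = (max (vnorm a) (nat \<bar>c\<bar>) \<le> s)"
| "cbound (Geq a c) s = (max (vnorm a) (nat \<bar>c\<bar>) \<le> s)"
| "cbound (Dvd a c m) s = True"

definition sys_norm :: "lsys \<Rightarrow> nat" where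
  "sys_norm S = (LEAST s. \<forall>a\<in>atoms S. cbound a s)"

fun modulus :: "constr \<Rightarrow> nat" where
  "modulus (Dvd a c m) = m"
| "modulus _ = 1"

definition sys_lcm :: "lsys \<Rightarrow> nat" where
  "sys_lcm S = Lcm (modulus ` atoms S)"

end

theory Submission
  imports Defs "Jordan_Normal_Form.Determinant"
begin

text \<open>Fix a solution \<open>x0\<close> and let \<open>L = lcm(S)\<close>. Divisibility atoms only depend on \<open>x mod L\<close>,
  and an equality or inequality atom keeps its truth value at every \<open>x\<close> satisfying the
  inequalities that express its truth value at \<open>x0\<close>. Writing \<open>x = r + L y\<close>, with \<open>r\<close> the
  componentwise remainder of \<open>x0\<close> modulo \<open>L\<close>, these become a system of inequalities in \<open>y\<close>
  with coefficients bounded by \<open>\<parallel>S\<parallel>\<close> and right-hand sides bounded by \<open>(d + 1) \<parallel>S\<parallel> + 1\<close>,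
  which is solved by \<open>x0 div L\<close>.

  Among the solutions of such a system, one minimising the potential
  \<open>\<parallel>y\<parallel>\<^sub>1\<^sup>3 + \<parallel>y\<parallel>\<^sub>1 - \<parallel>y\<parallel>\<^sub>2\<^sup>2\<close> is small. On the coordinates where it is large, the
  inequalities that are nearly tight at \<open>y\<close> admit no small kernel vector \<open>z\<close>, for one of
  \<open>y \<plusminus> z\<close> would be a solution of smaller potential. So these inequalities have full rank on
  those coordinates, and Cramer's rule bounds the coordinates by ratios of minors.\<close>

section \<open>Small kernel vectors of integer matrices\<close>

lemma abs_det_le_fact_pow:
  fixes A :: "int mat"
  assumes A: "A \<in> carrier_mat n n" and bound: "\<And>i j. i < n \<Longrightarrow> j < n \<Longrightarrow> \<bar>A $$ (i,j)\<bar> \<le> s"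
  shows "\<bar>det A\<bar> \<le> fact n * s ^ n"
proof -
  have "\<bar>det A\<bar> = \<bar>\<Sum>p | p permutes {0..<n}. signof p * (\<Prod>i = 0..<n. A $$ (i, p i))\<bar>"
    using det_def'[OF A] by simp
  also have "\<dots> \<le> (\<Sum>p | p permutes {0..<n}. \<bar>signof p * (\<Prod>i = 0..<n. A $$ (i, p i))\<bar>)"
    by (rule sum_abs)
  also have "\<dots> \<le> (\<Sum>p | p permutes {0..<n}. s ^ n)"
  proof (rule sum_mono)
    fix p assume "p \<in> {p. p permutes {0..<n}}"
    then have "\<bar>A $$ (i, p i)\<bar> \<le> s" if "i \<in> {0..<n}" for i
      using that bound permutes_in_image by fastforce
    then have "(\<Prod>i = 0..<n. \<bar>A $$ (i, p i)\<bar>) \<le> (\<Prod>i = 0..<n. s)"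
      by (intro prod_mono) auto
    then show "\<bar>signof p * (\<Prod>i = 0..<n. A $$ (i, p i))\<bar> \<le> s ^ n"
      by (simp add: abs_mult abs_prod sign_def)
  qed
  also have "\<dots> = fact n * s ^ n"
    using card_permutations[of "{0..<n}" n] by simp
  finally show ?thesis .
qed

lemma abs_cofactor_le_fact_pow:
  fixes A :: "int mat"
  assumes A: "A \<in> carrier_mat n n" and bound: "\<And>i j. i < n \<Longrightarrow> j < n \<Longrightarrow> \<bar>A $$ (i,j)\<bar> \<le> s"
    and "i < n" and "j < n"
  shows "\<bar>cofactor A i j\<bar> \<le> fact (n - 1) * s ^ (n - 1)"
proof -
  have "\<bar>det (mat_delete A i j)\<bar> \<le> fact (n - 1) * s ^ (n - 1)"
    using mat_delete_carrier[OF A] A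
    by (intro abs_det_le_fact_pow) (auto simp: mat_delete_def intro!: bound)
  then show ?thesis unfolding cofactor_def by (simp add: abs_mult)
qed

lemma mat_delete_replace_col [simp]: "mat_delete (replace_col A b k) i k = mat_delete A i k"
  by (intro eq_matI) (auto simp: mat_delete_def replace_col_def)

lemma abs_vec_le_by_cramer:
  fixes M :: "int mat"
  assumes M: "M \<in> carrier_mat n n" "det M \<noteq> 0"
    and bound: "\<And>i j. i < n \<Longrightarrow> j < n \<Longrightarrow> \<bar>M $$ (i,j)\<bar> \<le> s"
    and v: "v \<in> carrier_vec n" and Mv: "\<And>i. i < n \<Longrightarrow> \<bar>(M *\<^sub>v v) $ i\<bar> \<le> b"
    and k: "k < n"
  shows "\<bar>v $ k\<bar> \<le> fact n * s ^ (n - 1) * b"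
proof -
  let ?R = "replace_col M (M *\<^sub>v v) k"
  have R: "?R \<in> carrier_mat n n" using M by (simp add: replace_col_def)
  have expansion: "det ?R = (\<Sum>i<n. (M *\<^sub>v v) $ i * cofactor M i k)"
  proof -
    have "?R $$ (i, k) = (M *\<^sub>v v) $ i" if "i < n" for i
      using that M(1) k by (simp add: replace_col_def)
    moreover have "cofactor ?R i k = cofactor M i k" for i
      by (simp add: cofactor_def)
    ultimately show ?thesis
      unfolding laplace_expansion_column[OF R k] by simp
  qed
  have "\<bar>v $ k\<bar> \<le> \<bar>v $ k * det M\<bar>"
    using M(2) by (auto simp: abs_mult mult_le_cancel_left1)
  also have "\<dots> = \<bar>\<Sum>i<n. (M *\<^sub>v v) $ i * cofactor M i k\<bar>"
    using cramer_lemma_mat[OF M(1) v k] expansion by simp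
  also have "\<dots> \<le> (\<Sum>i<n. \<bar>(M *\<^sub>v v) $ i\<bar> * \<bar>cofactor M i k\<bar>)"
    unfolding abs_mult[symmetric] by (rule sum_abs)
  also have "\<dots> \<le> (\<Sum>i<n. b * (fact (n - 1) * s ^ (n - 1)))"
    using Mv abs_cofactor_le_fact_pow[OF M(1) bound _ k]
    by (intro sum_mono mult_mono) (auto intro: order_trans[OF abs_ge_zero])
  also have "\<dots> = fact n * s ^ (n - 1) * b"
    using k by (simp add: fact_reduce[of n] algebra_simps)
  finally show ?thesis .
qed

definition submat :: "('r \<Rightarrow> 'c \<Rightarrow> 'a) \<Rightarrow> 'r list \<Rightarrow> 'c list \<Rightarrow> 'a mat" where
  "submat B rs cs = mat (length rs) (length cs) (\<lambda>(i, j). B (rs ! i) (cs ! j))"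

lemma submat_carrier [simp]: "submat B rs cs \<in> carrier_mat (length rs) (length cs)"
  and dim_submat [simp]: "dim_row (submat B rs cs) = length rs" "dim_col (submat B rs cs) = length cs"
  and index_submat [simp]:
    "i < length rs \<Longrightarrow> j < length cs \<Longrightarrow> submat B rs cs $$ (i, j) = B (rs ! i) (cs ! j)"
  by (simp_all add: submat_def)

lemma abs_det_submat_le:
  fixes B :: "'r \<Rightarrow> 'c \<Rightarrow> int"
  assumes "length cs = length rs" and "\<And>i j. i \<in> set rs \<Longrightarrow> j \<in> set cs \<Longrightarrow> \<bar>B i j\<bar> \<le> s"
  shows "\<bar>det (submat B rs cs)\<bar> \<le> fact (length rs) * s ^ length rs"
  using assms submat_carrier[of B rs cs] by (intro abs_det_le_fact_pow) auto

lemma sum_set_distinct_eq_sum_nth: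
  "distinct xs \<Longrightarrow> (\<Sum>x\<in>set xs. f x) = (\<Sum>k<length xs. f (xs ! k))"
  by (simp add: sum.distinct_set_conv_list sum_list_sum_nth atLeast0LessThan)

lemma submat_mult_vec_nth:
  assumes "distinct cs" and "l < length rs"
  shows "(submat B rs cs *\<^sub>v vec (length cs) (\<lambda>k. x (cs ! k))) $ l = (\<Sum>j\<in>set cs. B (rs ! l) j * x j)"
  using assms by (simp add: scalar_prod_def sum_set_distinct_eq_sum_nth atLeast0LessThan)

lemma mat_delete_submat_snoc:
  assumes "k < length cs"
  shows "mat_delete (submat B (rs @ [i]) cs) (length rs) k = submat B rs (take k cs @ drop (Suc k) cs)"
  using assms by (intro eq_matI) (auto simp: mat_delete_def nth_append min_def)

lemma det_submat_snoc:
  assumes "length cs = Suc (length rs)"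
  shows "det (submat B (rs @ [i]) cs)
    = (\<Sum>k<length cs. B i (cs ! k) * ((-1) ^ (length rs + k) * det (submat B rs (take k cs @ drop (Suc k) cs))))"
proof -
  have "submat B (rs @ [i]) cs \<in> carrier_mat (length cs) (length cs)"
    using submat_carrier assms by (metis length_append_singleton)
  then show ?thesis
    using laplace_expansion_row[of "submat B (rs @ [i]) cs" "length cs" "length rs"] assms
    by (simp add: cofactor_def mat_delete_submat_snoc nth_append)
qed

text \<open>By \<open>det_submat_snoc\<close>, \<open>det (submat B (rs @ [i]) cs)\<close> is a linear form in the row \<open>B i\<close>
  whose coefficients do not depend on \<open>i\<close>. If all these determinants vanish, the
  coefficients form a kernel vector, bounded because they are minors of \<open>B\<close>.\<close>
lemma kernel_vector_of_singular_extensions: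
  fixes B :: "'r \<Rightarrow> 'c \<Rightarrow> int"
  assumes len: "length rs = r" "length cs = Suc r" and "distinct cs" and "0 \<le> s"
    and bound: "\<And>i j. i \<in> set rs \<Longrightarrow> j \<in> set cs \<Longrightarrow> \<bar>B i j\<bar> \<le> s"
    and singular: "\<And>i. i \<in> I \<Longrightarrow> det (submat B (rs @ [i]) cs) = 0"
  obtains z where "\<And>j. j \<notin> set cs \<Longrightarrow> z j = 0" and "z (cs ! r) = det (submat B rs (take r cs))"
    and "\<And>j. \<bar>z j\<bar> \<le> fact r * s ^ r" and "\<And>i. i \<in> I \<Longrightarrow> (\<Sum>j\<in>set cs. B i j * z j) = 0"
proof
  define w where "w k = (-1) ^ (r + k) * det (submat B rs (take k cs @ drop (Suc k) cs))" for k
  define z where "z j = (\<Sum>k<Suc r. if cs ! k = j then w k else 0)" for j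
  have z_nth: "z (cs ! k) = w k" if "k < Suc r" for k
  proof -
    have "z (cs ! k) = (\<Sum>k'<Suc r. if k' = k then w k' else 0)"
      unfolding z_def using nth_eq_iff_index_eq[OF \<open>distinct cs\<close>] that len by (intro sum.cong) auto
    then show ?thesis using that by simp
  qed
  show z_out: "z j = 0" if "j \<notin> set cs" for j
    using that len unfolding z_def by (intro sum.neutral) auto
  show "z (cs ! r) = det (submat B rs (take r cs))"
    using z_nth[of r] len by (simp add: w_def flip: mult_2)
  show "\<bar>z j\<bar> \<le> fact r * s ^ r" for j
  proof (cases "j \<in> set cs")
    case True
    then obtain k where k: "k < Suc r" "j = cs ! k" using len by (metis in_set_conv_nth)
    have "set (take k cs @ drop (Suc k) cs) \<subseteq> set cs"
      using set_take_subset set_drop_subset by (metis Un_least set_append)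
    then have "\<bar>det (submat B rs (take k cs @ drop (Suc k) cs))\<bar> \<le> fact r * s ^ r"
      using abs_det_submat_le[of "take k cs @ drop (Suc k) cs" rs B s] bound k len by auto
    then show ?thesis using z_nth[OF k(1)] k(2) by (simp add: w_def abs_mult)
  qed (use z_out \<open>0 \<le> s\<close> in simp)
  show "(\<Sum>j\<in>set cs. B i j * z j) = 0" if "i \<in> I" for i
    using singular[OF that] det_submat_snoc[of cs rs B i] \<open>distinct cs\<close> len z_nth
    by (simp add: sum_set_distinct_eq_sum_nth w_def)
qed

lemma maximal_nonsingular_submat:
  fixes B :: "'r \<Rightarrow> 'c \<Rightarrow> int"
  assumes "finite J"
  obtains rs cs where "length rs = length cs" "distinct cs" "set rs \<subseteq> I" "set cs \<subseteq> J"
    and "det (submat B rs cs) \<noteq> 0"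
    and "\<And>i c. i \<in> I \<Longrightarrow> c \<in> J - set cs \<Longrightarrow> det (submat B (rs @ [i]) (cs @ [c])) = 0"
proof -
  define nonsingular where "nonsingular r \<longleftrightarrow> (\<exists>rs cs. length rs = r \<and> length cs = r \<and> distinct cs
      \<and> set rs \<subseteq> I \<and> set cs \<subseteq> J \<and> det (submat B rs cs) \<noteq> 0)" for r
  have "det (submat B [] []) = 1"
    by (rule det_dim_zero) (metis submat_carrier list.size(3))
  then have "nonsingular 0"
    unfolding nonsingular_def by (intro exI[of _ "[]"]) simp
  have le_card: "r \<le> card J" if ns: "nonsingular r" for r
  proof -
    obtain cs where "length cs = r" "distinct cs" "set cs \<subseteq> J"
      using ns unfolding nonsingular_def by blast
    then show ?thesis using card_mono[OF \<open>finite J\<close>] distinct_card by metis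
  qed
  define r where "r = (GREATEST r. nonsingular r)"
  have "nonsingular r"
    unfolding r_def using \<open>nonsingular 0\<close> le_card by (rule GreatestI_nat)
  have not_larger: "\<not> nonsingular (Suc r)"
  proof
    assume "nonsingular (Suc r)"
    then have "Suc r \<le> r" unfolding r_def using le_card by (rule Greatest_le_nat)
    then show False by simp
  qed
  from \<open>nonsingular r\<close> obtain rs cs where rs: "length rs = r" "set rs \<subseteq> I"
    and cs: "length cs = r" "distinct cs" "set cs \<subseteq> J" and "det (submat B rs cs) \<noteq> 0"
    unfolding nonsingular_def by blast
  moreover have "det (submat B (rs @ [i]) (cs @ [c])) = 0" if "i \<in> I" "c \<in> J - set cs" for i c
  proof -
    have "length (rs @ [i]) = Suc r" "length (cs @ [c]) = Suc r" "distinct (cs @ [c])"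
      "set (rs @ [i]) \<subseteq> I" "set (cs @ [c]) \<subseteq> J"
      using that rs cs by auto
    then show ?thesis using not_larger unfolding nonsingular_def by blast
  qed
  ultimately show thesis
    using that[of rs cs] by auto
qed

lemma small_kernel_vector_of_maximal_submat:
  fixes B :: "'r \<Rightarrow> 'c \<Rightarrow> int"
  assumes "length rs = length cs" "distinct cs" "set rs \<subseteq> I" "set cs \<subseteq> J" "c \<in> J - set cs"
    and nonzero: "det (submat B rs cs) \<noteq> 0"
    and maximal: "\<And>i. i \<in> I \<Longrightarrow> det (submat B (rs @ [i]) (cs @ [c])) = 0"
    and "finite J" and "0 \<le> s" and bound: "\<And>i j. i \<in> I \<Longrightarrow> j \<in> J \<Longrightarrow> \<bar>B i j\<bar> \<le> s"
  obtains z where "\<And>j. j \<notin> J \<Longrightarrow> z j = 0" and "z c \<noteq> 0" and "\<And>j. \<bar>z j\<bar> \<le> fact (length cs) * s ^ length cs"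
    and "\<And>i. i \<in> I \<Longrightarrow> (\<Sum>j\<in>J. B i j * z j) = 0"
proof -
  have bounded: "\<bar>B i j\<bar> \<le> s" if "i \<in> set rs" "j \<in> set (cs @ [c])" for i j
    using that assms(3-5) bound by auto
  obtain z where support: "\<And>j. j \<notin> set (cs @ [c]) \<Longrightarrow> z j = 0"
    and "z c = det (submat B rs cs)" and z_bound: "\<And>j. \<bar>z j\<bar> \<le> fact (length cs) * s ^ length cs"
    and kernel: "\<And>i. i \<in> I \<Longrightarrow> (\<Sum>j\<in>set (cs @ [c]). B i j * z j) = 0"
    by (rule kernel_vector_of_singular_extensions[of rs "length cs" "cs @ [c]" s B I])
      (use assms bounded in \<open>auto simp: nth_append\<close>)
  have "z j = 0" if "j \<notin> J" for j
    using that assms(4,5) by (intro support) auto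
  moreover have "(\<Sum>j\<in>J. B i j * z j) = (\<Sum>j\<in>set (cs @ [c]). B i j * z j)" for i
    using support assms(4,5) \<open>finite J\<close> by (intro sum.mono_neutral_right) auto
  ultimately show thesis
    using that[of z] nonzero kernel \<open>z c = _\<close> z_bound by simp
qed

lemma inverse_bound_of_full_submat:
  fixes B :: "'r \<Rightarrow> 'c \<Rightarrow> int"
  assumes "length rs = length cs" "distinct cs" "set rs \<subseteq> I" "set cs = J"
    and nonzero: "det (submat B rs cs) \<noteq> 0" and bound: "\<And>i j. i \<in> I \<Longrightarrow> j \<in> J \<Longrightarrow> \<bar>B i j\<bar> \<le> s"
    and small: "\<forall>i\<in>I. \<bar>\<Sum>j\<in>J. B i j * x j\<bar> \<le> b" and "j \<in> J"
  shows "\<bar>x j\<bar> \<le> fact (card J) * s ^ (card J - 1) * b"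
proof -
  define r where "r = length cs"
  have entries: "rs ! i \<in> I" "cs ! i \<in> J" if "i < r" for i
    using that assms(1,3,4) nth_mem unfolding r_def by (metis subsetD, metis)
  obtain k where k: "k < r" "j = cs ! k" using assms(4) \<open>j \<in> J\<close> in_set_conv_nth unfolding r_def by metis
  have "\<bar>vec r (\<lambda>k. x (cs ! k)) $ k\<bar> \<le> fact r * s ^ (r - 1) * b"
  proof (rule abs_vec_le_by_cramer[of "submat B rs cs"])
    show "\<bar>(submat B rs cs *\<^sub>v vec r (\<lambda>k. x (cs ! k))) $ i\<bar> \<le> b" if "i < r" for i
      using small entries[OF that] submat_mult_vec_nth[OF assms(2), of i rs B x] that assms(1,4)
      by (simp add: r_def)
    show "\<bar>submat B rs cs $$ (i, i')\<bar> \<le> s" if "i < r" "i' < r" for i i'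
      using entries that assms(1) bound by (simp add: r_def)
  qed (use assms(1) nonzero k in \<open>auto simp: r_def\<close>)
  moreover have "card J = r" using assms(2,4) distinct_card unfolding r_def by blast
  ultimately show ?thesis using k by simp
qed

lemma fact_mult_power_mono:
  fixes s :: int
  assumes "k \<le> n" and "l \<le> m" and "1 \<le> s"
  shows "fact k * s ^ l \<le> fact n * s ^ m"
  using assms by (intro mult_mono fact_mono power_increasing) auto

text \<open>A maximal nonsingular square submatrix either misses a column of \<open>J\<close>, and then bordering
  it yields a kernel vector, or it uses all of \<open>J\<close>, and then Cramer's rule applies.\<close>
lemma small_kernel_vector_or_inverse_bound:
  fixes B :: "'r \<Rightarrow> 'c \<Rightarrow> int"
  assumes J: "finite J" "card J \<le> n" and s: "1 \<le> s"
    and bound: "\<And>i j. i \<in> I \<Longrightarrow> j \<in> J \<Longrightarrow> \<bar>B i j\<bar> \<le> s"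
  shows "(\<exists>z. (\<forall>j. j \<notin> J \<longrightarrow> z j = 0) \<and> (\<exists>j\<in>J. z j \<noteq> 0)
            \<and> (\<forall>j. \<bar>z j\<bar> \<le> fact (n - 1) * s ^ (n - 1)) \<and> (\<forall>i\<in>I. (\<Sum>j\<in>J. B i j * z j) = 0))
      \<or> (\<forall>x b. (\<forall>i\<in>I. \<bar>\<Sum>j\<in>J. B i j * x j\<bar> \<le> b)
            \<longrightarrow> (\<forall>j\<in>J. \<bar>x j\<bar> \<le> fact n * s ^ (n - 1) * b))"
proof -
  obtain rs cs where rs_cs: "length rs = length cs" "distinct cs" "set rs \<subseteq> I" "set cs \<subseteq> J"
    and nonzero: "det (submat B rs cs) \<noteq> 0"
    and maximal: "\<And>i c. i \<in> I \<Longrightarrow> c \<in> J - set cs \<Longrightarrow> det (submat B (rs @ [i]) (cs @ [c])) = 0"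
    by (rule maximal_nonsingular_submat[OF J(1), where I = I and B = B]) blast
  show ?thesis
  proof (cases "set cs = J")
    case False
    then obtain c where c: "c \<in> J - set cs" using rs_cs(4) by blast
    have "length cs < card J"
      using False rs_cs(2,4) J(1) by (metis distinct_card psubsetI psubset_card_mono)
    then have "fact (length cs) * s ^ length cs \<le> fact (n - 1) * s ^ (n - 1)"
      using J(2) s by (intro fact_mult_power_mono) auto
    moreover obtain z where "\<And>j. j \<notin> J \<Longrightarrow> z j = 0" "z c \<noteq> 0"
      "\<And>j. \<bar>z j\<bar> \<le> fact (length cs) * s ^ length cs" "\<And>i. i \<in> I \<Longrightarrow> (\<Sum>j\<in>J. B i j * z j) = 0"
      using small_kernel_vector_of_maximal_submat[OF rs_cs c nonzero maximal J(1), of s] c s bound by auto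
    ultimately show ?thesis
      using c by (intro disjI1 exI[of _ z]) (blast intro: order_trans)
  next
    case True
    show ?thesis
    proof (intro disjI2 allI impI ballI)
      fix x b j assume small: "\<forall>i\<in>I. \<bar>\<Sum>j\<in>J. B i j * x j\<bar> \<le> b" and "j \<in> J"
      then have "\<bar>x j\<bar> \<le> fact (card J) * s ^ (card J - 1) * b"
        using inverse_bound_of_full_submat[OF rs_cs(1-3) True nonzero bound] by blast
      moreover have "0 \<le> b"
      proof -
        obtain i where "i \<in> set rs" using rs_cs(1) True \<open>j \<in> J\<close> by (cases rs) auto
        then show ?thesis using small rs_cs(3) by (meson abs_ge_zero order_trans subsetD)
      qed
      then have "fact (card J) * s ^ (card J - 1) * b \<le> fact n * s ^ (n - 1) * b"
        using J(2) s by (intro mult_right_mono fact_mult_power_mono) auto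
      ultimately show "\<bar>x j\<bar> \<le> fact n * s ^ (n - 1) * b" by linarith
    qed
  qed
qed

section \<open>Small solutions of systems of linear inequalities\<close>

lemma cube_gap:
  fixes x L :: int
  assumes "0 \<le> x" and "x < L"
  shows "x ^ 3 + x < L ^ 3 + L - L ^ 2"
proof -
  have "x ^ 3 \<le> (L - 1) ^ 3" using assms by (intro power_mono) auto
  moreover have "0 \<le> (L - 1) * (L - 1)" by simp
  ultimately show ?thesis
    using assms by (simp add: power3_eq_cube power2_eq_square algebra_simps)
qed

lemma sum_squares_le_square_sum_abs:
  fixes y :: "'a \<Rightarrow> int"
  shows "(\<Sum>j\<in>A. (y j)\<^sup>2) \<le> (\<Sum>j\<in>A. \<bar>y j\<bar>)\<^sup>2"
proof (induction A rule: infinite_finite_induct)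
  case (insert j A)
  then show ?case
    by (simp add: power2_sum) (rule add_increasing2; simp add: sum_nonneg)
qed simp_all

lemma sum_abs_add_dominated:
  fixes y z :: "'a \<Rightarrow> int"
  assumes "\<And>j. j \<in> A \<Longrightarrow> \<bar>z j\<bar> \<le> \<bar>y j\<bar>"
  shows "(\<Sum>j\<in>A. \<bar>y j + z j\<bar>) = (\<Sum>j\<in>A. \<bar>y j\<bar>) + (\<Sum>j\<in>A. sgn (y j) * z j)"
proof -
  have "\<bar>y j + z j\<bar> = \<bar>y j\<bar> + sgn (y j) * z j" if "j \<in> A" for j
    using assms[OF that] by (auto simp: sgn_if abs_if split: if_splits)
  then show ?thesis by (simp add: sum.distrib)
qed

lemma sum_squares_parallelogram:
  fixes y z :: "'a \<Rightarrow> int"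
  shows "(\<Sum>j\<in>A. (y j + z j)\<^sup>2) + (\<Sum>j\<in>A. (y j - z j)\<^sup>2) = 2 * (\<Sum>j\<in>A. (y j)\<^sup>2) + 2 * (\<Sum>j\<in>A. (z j)\<^sup>2)"
proof -
  have "(y j + z j)\<^sup>2 + (y j - z j)\<^sup>2 = 2 * (y j)\<^sup>2 + 2 * (z j)\<^sup>2" for j
    by (simp add: power2_eq_square algebra_simps)
  then show ?thesis by (simp add: sum.distrib[symmetric] sum_distrib_left)
qed

definition potential :: "nat \<Rightarrow> (nat \<Rightarrow> int) \<Rightarrow> int" where
  "potential d y = (\<Sum>j<d. \<bar>y j\<bar>) ^ 3 + (\<Sum>j<d. \<bar>y j\<bar>) - (\<Sum>j<d. (y j)\<^sup>2)"

lemma potential_nonneg: "0 \<le> potential d y"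
proof -
  define L where "L = (\<Sum>j<d. \<bar>y j\<bar>)"
  have "0 \<le> L" by (simp add: L_def sum_nonneg)
  moreover have "L\<^sup>2 \<le> L ^ 3" if "1 \<le> L"
    by (rule power_increasing) (use that in simp_all)
  ultimately have "L\<^sup>2 \<le> L ^ 3 + L"
    by (cases "L = 0") auto
  then show ?thesis
    using sum_squares_le_square_sum_abs[of y "{..<d}"] by (simp add: potential_def L_def)
qed

text \<open>Since \<open>z\<close> is dominated by \<open>y\<close>, the \<open>\<ell>\<^sub>1\<close>-norm changes by \<open>\<plusminus>\<sigma>\<close> along \<open>y \<plusminus> z\<close>.
  If \<open>\<sigma> \<noteq> 0\<close>, the cubic term makes the side with the smaller norm win; if \<open>\<sigma> = 0\<close>, the
  parallelogram law makes the squared \<open>\<ell>\<^sub>2\<close>-norm grow on one side.\<close>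
lemma potential_decreases:
  fixes y z :: "nat \<Rightarrow> int"
  assumes dominated: "\<And>j. j < d \<Longrightarrow> \<bar>z j\<bar> \<le> \<bar>y j\<bar>" and nonzero: "\<exists>j<d. z j \<noteq> 0"
  shows "potential d (\<lambda>j. y j + z j) < potential d y \<or> potential d (\<lambda>j. y j - z j) < potential d y"
proof -
  define L where "L = (\<Sum>j<d. \<bar>y j\<bar>)"
  define \<sigma> where "\<sigma> = (\<Sum>j<d. sgn (y j) * z j)"
  define sq where "sq x = (\<Sum>j<d. (x j)\<^sup>2)" for x :: "nat \<Rightarrow> int"
  have norm_plus: "(\<Sum>j<d. \<bar>y j + z j\<bar>) = L + \<sigma>"
    using sum_abs_add_dominated[of "{..<d}" z y] dominated by (simp add: L_def \<sigma>_def)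
  have norm_minus: "(\<Sum>j<d. \<bar>y j - z j\<bar>) = L - \<sigma>"
    using sum_abs_add_dominated[of "{..<d}" "\<lambda>j. - z j" y] dominated by (simp add: L_def \<sigma>_def sum_negf)
  have parallelogram: "sq (\<lambda>j. y j + z j) + sq (\<lambda>j. y j - z j) = 2 * sq y + 2 * sq z"
    unfolding sq_def by (rule sum_squares_parallelogram)
  have "0 < sq z"
    using nonzero unfolding sq_def by (auto intro: sum_pos2)
  have sq_le: "sq x \<le> (\<Sum>j<d. \<bar>x j\<bar>)\<^sup>2" for x
    unfolding sq_def by (rule sum_squares_le_square_sum_abs)
  have sq_nonneg: "0 \<le> sq x" for x by (simp add: sq_def sum_nonneg)
  have "0 \<le> L + \<sigma>" "0 \<le> L - \<sigma>"
    using norm_plus norm_minus by (metis sum_nonneg abs_ge_zero)+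
  have potential_eq: "potential d x = (\<Sum>j<d. \<bar>x j\<bar>) ^ 3 + (\<Sum>j<d. \<bar>x j\<bar>) - sq x" for x
    by (simp add: potential_def sq_def)
  consider "\<sigma> = 0" | "0 < \<sigma>" | "\<sigma> < 0" by linarith
  then show ?thesis
  proof cases
    case 1
    then show ?thesis
      using parallelogram \<open>0 < sq z\<close> by (simp add: potential_eq norm_plus norm_minus L_def) linarith
  next
    case 2
    have "(L - \<sigma>) ^ 3 + (L - \<sigma>) < L ^ 3 + L - L\<^sup>2"
      using 2 \<open>0 \<le> L - \<sigma>\<close> by (intro cube_gap) auto
    then show ?thesis
      using sq_le[of y] sq_nonneg[of "\<lambda>j. y j - z j"]
      by (simp add: potential_eq norm_minus L_def)
  next
    case 3
    have "(L + \<sigma>) ^ 3 + (L + \<sigma>) < L ^ 3 + L - L\<^sup>2"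
      using 3 \<open>0 \<le> L + \<sigma>\<close> by (intro cube_gap) auto
    then show ?thesis
      using sq_le[of y] sq_nonneg[of "\<lambda>j. y j + z j"]
      by (simp add: potential_eq norm_plus L_def)
  qed
qed

definition solves_ineqs :: "nat \<Rightarrow> ((nat \<Rightarrow> int) \<times> int) set \<Rightarrow> (nat \<Rightarrow> int) \<Rightarrow> bool" where
  "solves_ineqs d P y \<longleftrightarrow> (\<forall>(a, b)\<in>P. b \<le> (\<Sum>j<d. a j * y j))"

lemma solves_ineqs_minimal_potential:
  assumes "solves_ineqs d P y0"
  obtains y where "solves_ineqs d P y" and "\<And>y'. solves_ineqs d P y' \<Longrightarrow> potential d y \<le> potential d y'"
proof -
  obtain y where "solves_ineqs d P y"
    and "\<forall>y'. solves_ineqs d P y' \<longrightarrow> nat (potential d y) \<le> nat (potential d y')"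
    using ex_has_least_nat[of "solves_ineqs d P" y0 "\<lambda>y. nat (potential d y)"] assms by blast
  with potential_nonneg that show thesis by (metis nat_le_eq_zle)
qed

lemma solves_ineqs_shift:
  assumes "solves_ineqs d P y"
    and tight: "\<And>a b. (a, b) \<in> P \<Longrightarrow> (\<Sum>j<d. a j * y j) - b < \<theta> \<Longrightarrow> (\<Sum>j<d. a j * z j) = 0"
    and small: "\<And>a b. (a, b) \<in> P \<Longrightarrow> \<bar>\<Sum>j<d. a j * z j\<bar> \<le> \<theta>"
  shows "solves_ineqs d P (\<lambda>j. y j + z j)"
  unfolding solves_ineqs_def
proof (intro ballI, clarify)
  fix a b assume ab: "(a, b) \<in> P"
  have "(\<Sum>j<d. a j * (y j + z j)) = (\<Sum>j<d. a j * y j) + (\<Sum>j<d. a j * z j)"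
    by (simp add: distrib_left sum.distrib)
  moreover have "b \<le> (\<Sum>j<d. a j * y j)"
    using assms(1) ab unfolding solves_ineqs_def by blast
  ultimately show "b \<le> (\<Sum>j<d. a j * (y j + z j))"
    using tight[OF ab] small[OF ab] by force
qed

lemma abs_sum_mult_le_card:
  fixes f g :: "'a \<Rightarrow> int"
  assumes "\<And>j. j \<in> A \<Longrightarrow> \<bar>f j\<bar> \<le> s" and "\<And>j. j \<in> A \<Longrightarrow> \<bar>g j\<bar> \<le> D" and "0 \<le> s"
  shows "\<bar>\<Sum>j\<in>A. f j * g j\<bar> \<le> int (card A) * s * D"
proof -
  have "\<bar>\<Sum>j\<in>A. f j * g j\<bar> \<le> (\<Sum>j\<in>A. \<bar>f j\<bar> * \<bar>g j\<bar>)"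
    unfolding abs_mult[symmetric] by (rule sum_abs)
  also have "\<dots> \<le> (\<Sum>j\<in>A. s * D)"
    using assms by (intro sum_mono mult_mono) (auto intro: order_trans[OF abs_ge_zero])
  finally show ?thesis by (simp add: mult.assoc)
qed

text \<open>Both \<open>y + z\<close> and \<open>y - z\<close> would be solutions: the inequalities with slack below
  \<open>d s D\<close> do not move, the others move by at most \<open>d s D\<close>. As \<open>z\<close> is dominated by \<open>y\<close>,
  one of them has smaller potential.\<close>
lemma minimal_potential_no_small_kernel:
  assumes y: "solves_ineqs d P y" and minimal: "\<And>y'. solves_ineqs d P y' \<Longrightarrow> potential d y \<le> potential d y'"
    and coeff: "\<And>a b j. (a, b) \<in> P \<Longrightarrow> j < d \<Longrightarrow> \<bar>a j\<bar> \<le> s" and "0 \<le> s"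
    and support: "\<And>j. z j \<noteq> 0 \<Longrightarrow> j < d \<and> D < \<bar>y j\<bar>" and nonzero: "\<exists>j. z j \<noteq> 0"
    and small: "\<And>j. \<bar>z j\<bar> \<le> D"
    and kernel: "\<And>a b. (a, b) \<in> P \<Longrightarrow> (\<Sum>j<d. a j * y j) - b < int d * s * D \<Longrightarrow> (\<Sum>j<d. a j * z j) = 0"
  shows False
proof -
  have moved: "\<bar>\<Sum>j<d. a j * z j\<bar> \<le> int d * s * D" if "(a, b) \<in> P" for a b
    using abs_sum_mult_le_card[of "{..<d}" a s z D] coeff[OF that] small \<open>0 \<le> s\<close> by simp
  have "solves_ineqs d P (\<lambda>j. y j + z j)"
    using y kernel moved by (rule solves_ineqs_shift)
  moreover have "solves_ineqs d P (\<lambda>j. y j + - z j)"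
    using y kernel moved by (intro solves_ineqs_shift) (auto simp: sum_negf)
  moreover have "potential d (\<lambda>j. y j + z j) < potential d y \<or> potential d (\<lambda>j. y j - z j) < potential d y"
  proof (rule potential_decreases)
    show "\<bar>z j\<bar> \<le> \<bar>y j\<bar>" for j
      using support[of j] small[of j] by (cases "z j = 0") auto
    show "\<exists>j<d. z j \<noteq> 0" using nonzero support by blast
  qed
  ultimately show False
    using minimal by fastforce
qed

lemma restricted_row_bound:
  fixes a y :: "nat \<Rightarrow> int"
  assumes J: "J \<subseteq> {..<d}" and slack: "b \<le> (\<Sum>j<d. a j * y j)" "(\<Sum>j<d. a j * y j) - b < \<theta>"
    and "\<bar>b\<bar> \<le> t" and a: "\<And>j. j < d \<Longrightarrow> \<bar>a j\<bar> \<le> s"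
    and y: "\<And>j. j < d \<Longrightarrow> j \<notin> J \<Longrightarrow> \<bar>y j\<bar> \<le> D" and "0 \<le> s" and "0 \<le> D"
  shows "\<bar>\<Sum>j\<in>J. a j * y j\<bar> \<le> t + \<theta> + int d * s * D"
proof -
  have split: "(\<Sum>j<d. a j * y j) = (\<Sum>j\<in>{..<d} - J. a j * y j) + (\<Sum>j\<in>J. a j * y j)"
    using J by (simp add: sum.subset_diff)
  have "\<bar>\<Sum>j\<in>{..<d} - J. a j * y j\<bar> \<le> int (card ({..<d} - J)) * s * D"
    using a y \<open>0 \<le> s\<close> by (intro abs_sum_mult_le_card) auto
  also have "\<dots> \<le> int d * s * D"
    using \<open>0 \<le> s\<close> \<open>0 \<le> D\<close> card_mono[of "{..<d}" "{..<d} - J"]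
    by (intro mult_right_mono) auto
  finally show ?thesis
    using split slack \<open>\<bar>b\<bar> \<le> t\<close> by linarith
qed

lemma coordinates_bound_if_tight_rows_determine:
  fixes y :: "nat \<Rightarrow> int"
  assumes y: "solves_ineqs d P y"
    and coeff: "\<And>a b j. (a, b) \<in> P \<Longrightarrow> j < d \<Longrightarrow> \<bar>a j\<bar> \<le> s"
    and rhs: "\<And>a b. (a, b) \<in> P \<Longrightarrow> \<bar>b\<bar> \<le> t"
    and "0 \<le> s" and "0 \<le> D" and "D \<le> M" and "1 \<le> t + 2 * (int d * s * D)"
    and J: "J = {j. j < d \<and> D < \<bar>y j\<bar>}"
    and T: "T = {a. \<exists>b. (a, b) \<in> P \<and> (\<Sum>j<d. a j * y j) - b < int d * s * D}"
    and determine: "\<forall>x c. (\<forall>a\<in>T. \<bar>\<Sum>j\<in>J. a j * x j\<bar> \<le> c) \<longrightarrow> (\<forall>j\<in>J. \<bar>x j\<bar> \<le> M * c)"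
    and "j < d"
  shows "\<bar>y j\<bar> \<le> M * (t + 2 * (int d * s * D))"
proof (cases "j \<in> J")
  case True
  have "\<bar>\<Sum>j\<in>J. a j * y j\<bar> \<le> t + 2 * (int d * s * D)" if aT: "a \<in> T" for a
  proof -
    obtain b where ab: "(a, b) \<in> P" and slack: "(\<Sum>j<d. a j * y j) - b < int d * s * D"
      using aT T by blast
    have "b \<le> (\<Sum>j<d. a j * y j)" using y ab unfolding solves_ineqs_def by blast
    have "\<bar>\<Sum>j\<in>J. a j * y j\<bar> \<le> t + int d * s * D + int d * s * D"
    proof (rule restricted_row_bound[where D = D and s = s])
      show "\<bar>y j\<bar> \<le> D" if "j < d" "j \<notin> J" for j
        using that J by simp
      show "\<bar>a j\<bar> \<le> s" if "j < d" for j
        using ab that by (rule coeff)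
    qed (use J slack rhs[OF ab] \<open>b \<le> _\<close> \<open>0 \<le> s\<close> \<open>0 \<le> D\<close> in auto)
    then show ?thesis by linarith
  qed
  then show ?thesis using determine True by blast
next
  case False
  then have "\<bar>y j\<bar> \<le> M * 1" using J \<open>j < d\<close> \<open>D \<le> M\<close> by simp
  also have "\<dots> \<le> M * (t + 2 * (int d * s * D))"
    using assms(5-7) by (intro mult_left_mono) auto
  finally show ?thesis .
qed

lemma small_solution_of_ineqs_pos:
  fixes P :: "((nat \<Rightarrow> int) \<times> int) set" and s t :: int
  assumes "1 \<le> d" and "1 \<le> s" and "0 \<le> t"
    and coeff: "\<And>a b j. (a, b) \<in> P \<Longrightarrow> j < d \<Longrightarrow> \<bar>a j\<bar> \<le> s"
    and rhs: "\<And>a b. (a, b) \<in> P \<Longrightarrow> \<bar>b\<bar> \<le> t"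
    and "solves_ineqs d P y0"
  shows "\<exists>y. solves_ineqs d P y \<and> (\<forall>j<d. \<bar>y j\<bar> \<le> fact d * s ^ (d - 1) * (t + 2 * fact d * s ^ d))"
proof -
  obtain y where y: "solves_ineqs d P y"
    and minimal: "\<And>y'. solves_ineqs d P y' \<Longrightarrow> potential d y \<le> potential d y'"
    using solves_ineqs_minimal_potential[OF \<open>solves_ineqs d P y0\<close>] by blast
  define D where "D = fact (d - 1) * s ^ (d - 1)"
  define J where "J = {j. j < d \<and> D < \<bar>y j\<bar>}"
  define T where "T = {a. \<exists>b. (a, b) \<in> P \<and> (\<Sum>j<d. a j * y j) - b < int d * s * D}"
  have J: "J \<subseteq> {..<d}" "finite J" "card J \<le> d"
    using card_mono[of "{..<d}" J] by (auto simp: J_def)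
  have "1 * 1 \<le> D"
    using \<open>1 \<le> s\<close> unfolding D_def by (intro mult_mono fact_ge_1 one_le_power) auto
  moreover have "D \<le> fact d * s ^ (d - 1)" "int d * s * D = fact d * s ^ d"
    using assms(1,2) by (auto simp: D_def fact_reduce[of d] power_eq_if[of s d] intro: fact_mult_power_mono)
  ultimately have D: "1 \<le> D" "D \<le> fact d * s ^ (d - 1)" "int d * s * D = fact d * s ^ d"
    by simp_all
  show ?thesis
  proof (rule disjE[OF small_kernel_vector_or_inverse_bound[of J d s T "\<lambda>a. a", OF J(2,3) \<open>1 \<le> s\<close>]])
    show "\<bar>a j\<bar> \<le> s" if "a \<in> T" "j \<in> J" for a j
      using that coeff J(1) unfolding T_def by blast
  next
    assume "\<exists>z. (\<forall>j. j \<notin> J \<longrightarrow> z j = 0) \<and> (\<exists>j\<in>J. z j \<noteq> 0)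
      \<and> (\<forall>j. \<bar>z j\<bar> \<le> fact (d - 1) * s ^ (d - 1)) \<and> (\<forall>a\<in>T. (\<Sum>j\<in>J. a j * z j) = 0)"
    then obtain z where support: "\<forall>j. j \<notin> J \<longrightarrow> z j = 0" and nonzero: "\<exists>j\<in>J. z j \<noteq> 0"
      and small: "\<forall>j. \<bar>z j\<bar> \<le> fact (d - 1) * s ^ (d - 1)" and kernel: "\<forall>a\<in>T. (\<Sum>j\<in>J. a j * z j) = 0"
      by blast
    have restrict: "(\<Sum>j<d. a j * z j) = (\<Sum>j\<in>J. a j * z j)" for a :: "nat \<Rightarrow> int"
      using J(1) support by (intro sum.mono_neutral_right) auto
    show ?thesis
    proof (rule FalseE, rule minimal_potential_no_small_kernel[where P = P and y = y and z = z and D = D])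
      show "potential d y \<le> potential d y'" if "solves_ineqs d P y'" for y'
        using that by (rule minimal)
      show "\<bar>a j\<bar> \<le> s" if "(a, b) \<in> P" "j < d" for a b j
        using that by (rule coeff)
      show "(\<Sum>j<d. a j * z j) = 0" if "(a, b) \<in> P" "(\<Sum>j<d. a j * y j) - b < int d * s * D" for a b
        using that kernel by (auto simp: restrict T_def)
    qed (use y support nonzero small \<open>1 \<le> s\<close> in \<open>auto simp: J_def D_def\<close>)
  next
    assume determine: "\<forall>x c. (\<forall>a\<in>T. \<bar>\<Sum>j\<in>J. a j * x j\<bar> \<le> c)
      \<longrightarrow> (\<forall>j\<in>J. \<bar>x j\<bar> \<le> fact d * s ^ (d - 1) * c)"
    have "\<bar>y j\<bar> \<le> fact d * s ^ (d - 1) * (t + 2 * (int d * s * D))" if "j < d" for j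
    proof (rule coordinates_bound_if_tight_rows_determine[OF y _ _ _ _ D(2) _ J_def T_def determine that])
      show "\<bar>a j\<bar> \<le> s" if "(a, b) \<in> P" "j < d" for a b j
        using that by (rule coeff)
      show "\<bar>b\<bar> \<le> t" if "(a, b) \<in> P" for a b
        using that by (rule rhs)
    next
      have "1 * 1 \<le> fact d * s ^ d"
        using \<open>1 \<le> s\<close> by (intro mult_mono fact_ge_1 one_le_power) auto
      then show "1 \<le> t + 2 * (int d * s * D)" using \<open>0 \<le> t\<close> D(3) by simp
    qed (use \<open>1 \<le> s\<close> D(1) in auto)
    then show ?thesis using y D(3) by (auto simp: mult.assoc)
  qed
qed

lemma small_solution_of_ineqs:
  fixes P :: "((nat \<Rightarrow> int) \<times> int) set" and s t :: int
  assumes "0 \<le> s" and "0 \<le> t"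
    and coeff: "\<And>a b j. (a, b) \<in> P \<Longrightarrow> j < d \<Longrightarrow> \<bar>a j\<bar> \<le> s"
    and rhs: "\<And>a b. (a, b) \<in> P \<Longrightarrow> \<bar>b\<bar> \<le> t"
    and y0: "solves_ineqs d P y0"
  shows "\<exists>y. solves_ineqs d P y \<and> (\<forall>j<d. \<bar>y j\<bar> \<le> fact d * s ^ (d - 1) * (t + 2 * fact d * s ^ d))"
proof (cases "s = 0 \<or> d = 0")
  case True
  have "b \<le> 0" if "(a, b) \<in> P" for a b
    using y0 coeff[OF that] True that unfolding solves_ineqs_def by force
  moreover have "0 \<le> fact d * s ^ (d - 1) * (t + 2 * fact d * s ^ d)"
    using \<open>0 \<le> s\<close> \<open>0 \<le> t\<close> by simp
  ultimately show ?thesis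
    by (intro exI[of _ "\<lambda>_. 0"]) (auto simp: solves_ineqs_def)
next
  case False
  show ?thesis
  proof (rule small_solution_of_ineqs_pos)
    show "1 \<le> d" "1 \<le> s" using False \<open>0 \<le> s\<close> by auto
    show "\<bar>a j\<bar> \<le> s" if "(a, b) \<in> P" "j < d" for a b j
      using that by (rule coeff)
    show "\<bar>b\<bar> \<le> t" if "(a, b) \<in> P" for a b
      using that by (rule rhs)
  qed (fact \<open>0 \<le> t\<close> y0)+
qed

section \<open>Solutions in a residue class\<close>

definition ceil_div :: "int \<Rightarrow> int \<Rightarrow> int" where
  "ceil_div u L = - ((- u) div L)"

lemma le_mult_iff_ceil_div_le:
  assumes "0 < L"
  shows "u \<le> L * v \<longleftrightarrow> ceil_div u L \<le> v"
proof -
  define q where "q = (- u) div L"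
  define m where "m = (- u) mod L"
  have "q * L + m = - u"
    unfolding q_def m_def by (rule div_mult_mod_eq)
  then have u: "u = - (L * q) - m" by (simp add: algebra_simps)
  have "0 \<le> m" "m < L" using assms by (simp_all add: m_def)
  have "u \<le> L * v \<longleftrightarrow> - q \<le> v"
  proof
    assume "u \<le> L * v"
    then have "L * (- q - 1) < L * v" using u \<open>m < L\<close> by (simp add: algebra_simps)
    then show "- q \<le> v" using assms by (simp add: mult_less_cancel_left_pos)
  next
    assume "- q \<le> v"
    then have "L * (- q) \<le> L * v" using assms by (intro mult_left_mono) auto
    then show "u \<le> L * v" using u \<open>0 \<le> m\<close> by linarith
  qed
  then show ?thesis by (simp add: ceil_div_def q_def)
qed

lemma abs_ceil_div_le:
  assumes "1 \<le> L" and "0 \<le> A" and "\<bar>u\<bar> \<le> A + L * B"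
  shows "\<bar>ceil_div u L\<bar> \<le> A + B"
proof -
  define c where "c = ceil_div u L"
  have "u \<le> L * c" and "\<not> u \<le> L * (c - 1)"
    using le_mult_iff_ceil_div_le[of L u] assms(1) by (simp_all add: c_def)
  moreover have "A \<le> L * A" using assms(1,2) by (simp add: mult_le_cancel_right1)
  ultimately have "L * (c - 1) < L * (A + B)" and "L * (- A - B) \<le> L * c"
    using assms(3) by (auto simp: algebra_simps)
  then have "c - 1 < A + B" and "- A - B \<le> c"
    using assms(1) by (simp_all add: mult_less_cancel_left_pos)
  then show ?thesis by (simp add: c_def)
qed

text \<open>Writing \<open>x = r + L y\<close> with a fixed remainder vector \<open>r\<close>, the inequality \<open>a \<cdot> x \<ge> g\<close>
  becomes \<open>a \<cdot> y \<ge> \<lceil>(g - a \<cdot> r) / L\<rceil>\<close>, whose right-hand side is bounded independently of \<open>L\<close>.\<close>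
lemma small_solution_of_ineqs_mod:
  fixes P :: "((nat \<Rightarrow> int) \<times> int) set" and L s t :: int and r y0 :: "nat \<Rightarrow> int"
  assumes "1 \<le> L" and "0 \<le> s" and "0 \<le> t"
    and coeff: "\<And>a g j. (a, g) \<in> P \<Longrightarrow> j < d \<Longrightarrow> \<bar>a j\<bar> \<le> s"
    and rhs: "\<And>a g. (a, g) \<in> P \<Longrightarrow> \<bar>g\<bar> \<le> t"
    and r: "\<And>j. j < d \<Longrightarrow> 0 \<le> r j \<and> r j < L"
    and "solves_ineqs d P (\<lambda>j. r j + L * y0 j)"
  shows "\<exists>y. solves_ineqs d P (\<lambda>j. r j + L * y j)
           \<and> (\<forall>j<d. \<bar>y j\<bar> \<le> fact d * s ^ (d - 1) * (t + int d * s + 2 * fact d * s ^ d))"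
proof -
  define P' where "P' = (\<lambda>(a, g). (a, ceil_div (g - (\<Sum>j<d. a j * r j)) L)) ` P"
  have shift: "solves_ineqs d P (\<lambda>j. r j + L * y j) \<longleftrightarrow> solves_ineqs d P' y" for y
  proof -
    have "(\<Sum>j<d. a j * (r j + L * y j)) = (\<Sum>j<d. a j * r j) + L * (\<Sum>j<d. a j * y j)" for a
      by (simp add: algebra_simps sum.distrib sum_distrib_left)
    moreover have "g \<le> (\<Sum>j<d. a j * r j) + L * (\<Sum>j<d. a j * y j)
        \<longleftrightarrow> g - (\<Sum>j<d. a j * r j) \<le> L * (\<Sum>j<d. a j * y j)" for a g
      by linarith
    ultimately have "g \<le> (\<Sum>j<d. a j * (r j + L * y j))
        \<longleftrightarrow> ceil_div (g - (\<Sum>j<d. a j * r j)) L \<le> (\<Sum>j<d. a j * y j)" for a g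
      using le_mult_iff_ceil_div_le \<open>1 \<le> L\<close> by simp
    then show ?thesis by (auto simp: solves_ineqs_def P'_def)
  qed
  have rhs': "\<bar>b\<bar> \<le> t + int d * s" if ab: "(a, b) \<in> P'" for a b
  proof -
    obtain g where g: "(a, g) \<in> P" and b: "b = ceil_div (g - (\<Sum>j<d. a j * r j)) L"
      using ab unfolding P'_def by force
    have "\<bar>r j\<bar> \<le> L" if "j < d" for j using r[OF that] by simp
    then have "\<bar>\<Sum>j<d. a j * r j\<bar> \<le> int (card {..<d}) * s * L"
      using coeff[OF g] \<open>0 \<le> s\<close> by (intro abs_sum_mult_le_card) auto
    then have "\<bar>g - (\<Sum>j<d. a j * r j)\<bar> \<le> t + L * (int d * s)"
      using rhs[OF g] by (simp add: algebra_simps)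
    then show ?thesis
      unfolding b using \<open>1 \<le> L\<close> \<open>0 \<le> t\<close> by (intro abs_ceil_div_le) auto
  qed
  have coeff': "\<bar>a j\<bar> \<le> s" if "(a, b) \<in> P'" "j < d" for a b j
    using that coeff unfolding P'_def by auto
  have "\<exists>y. solves_ineqs d P' y
      \<and> (\<forall>j<d. \<bar>y j\<bar> \<le> fact d * s ^ (d - 1) * (t + int d * s + 2 * fact d * s ^ d))"
  proof (rule small_solution_of_ineqs)
    show "solves_ineqs d P' y0" using shift \<open>solves_ineqs d P (\<lambda>j. r j + L * y0 j)\<close> by blast
  qed (use \<open>0 \<le> s\<close> \<open>0 \<le> t\<close> coeff' rhs' in auto)
  then show ?thesis using shift by blast
qed

lemma fact_mult_power_le:
  fixes s N :: int
  assumes "k \<le> d" and "0 \<le> s" and "int d * s \<le> N"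
  shows "fact d * s ^ k \<le> int d ^ (d - k) * N ^ k"
proof -
  have "fact d \<le> int d ^ (d - k) * int d ^ k"
    using fact_le_power[of d, where 'a = int] assms(1) by (simp flip: power_add)
  then have "fact d * s ^ k \<le> int d ^ (d - k) * int d ^ k * s ^ k"
    using assms(2) by (intro mult_right_mono) auto
  also have "\<dots> = int d ^ (d - k) * (int d * s) ^ k"
    by (simp add: power_mult_distrib)
  also have "\<dots> \<le> int d ^ (d - k) * N ^ k"
    using assms(2,3) by (intro mult_left_mono power_mono) auto
  finally show ?thesis .
qed

lemma solution_bound_le_power:
  fixes s :: int
  assumes "1 \<le> d" and "0 \<le> s"
  shows "int d * (fact d * s ^ (d - 1) * (s + 1 + int d * s + 2 * fact d * s ^ d))
           \<le> (2 + int d + int d ^ 2 * s) ^ (2 * d + 1)"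
proof (cases "s = 0")
  case True
  then show ?thesis
    using assms(1) by (cases "d = 1") (auto simp: power_0_left)
next
  case False
  then have "1 \<le> s" using assms(2) by simp
  define N where "N = 2 + int d + int d ^ 2 * s"
  have "1 \<le> int d" using assms(1) by simp
  have le: "s \<le> int d * s" "int d * s \<le> int d * (int d * s)"
    using \<open>1 \<le> int d\<close> \<open>1 \<le> s\<close> mult_right_mono[OF \<open>1 \<le> int d\<close>] by auto
  have le3: "int d * 1 \<le> int d * (int d * s)"
    using \<open>1 \<le> int d\<close> \<open>1 \<le> s\<close> le by (intro mult_left_mono) linarith+
  have ds: "0 \<le> int d * s" "int d * s \<le> N" "s + 1 + int d * s \<le> 2 * N" "2 * int d \<le> N" "1 \<le> N"
    unfolding N_def power2_eq_square mult.assoc by (smt (verit) \<open>1 \<le> s\<close> \<open>1 \<le> int d\<close> le le3)+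
  have A: "fact d * s ^ (d - 1) \<le> int d * N ^ (d - 1)"
    using fact_mult_power_le[of "d - 1" d s N] assms ds by simp
  have B: "fact d * s ^ d \<le> N ^ d"
    using fact_mult_power_le[of d d s N] assms ds by simp
  have "N \<le> N ^ d" using \<open>1 \<le> N\<close> assms(1) by (metis power_increasing power_one_right)
  then have C: "s + 1 + int d * s + 2 * fact d * s ^ d \<le> 4 * N ^ d"
    using ds(3) B by linarith
  have "fact d * s ^ (d - 1) * (s + 1 + int d * s + 2 * fact d * s ^ d) \<le> int d * N ^ (d - 1) * (4 * N ^ d)"
    using assms(2) ds(1) \<open>1 \<le> int d\<close> \<open>1 \<le> N\<close> by (intro mult_mono[OF A C]) auto
  then have "int d * (fact d * s ^ (d - 1) * (s + 1 + int d * s + 2 * fact d * s ^ d))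
      \<le> int d * (int d * N ^ (d - 1) * (4 * N ^ d))"
    using \<open>1 \<le> int d\<close> by (intro mult_left_mono) auto
  also have "\<dots> = (2 * int d) ^ 2 * (N ^ (d - 1) * N ^ d)"
    by (simp add: power2_eq_square algebra_simps)
  also have "N ^ (d - 1) * N ^ d = N ^ (2 * d - 1)"
    using assms(1) by (simp flip: power_add) (simp add: mult_2)
  also have "(2 * int d) ^ 2 * N ^ (2 * d - 1) \<le> N ^ 2 * N ^ (2 * d - 1)"
    using ds \<open>1 \<le> int d\<close> by (intro mult_right_mono power_mono) auto
  also have "\<dots> = N ^ (2 * d + 1)"
    using assms(1) by (simp flip: power_add)
  finally show ?thesis by (simp add: N_def)
qed

lemma inner_map_upt:
  assumes "length a = d"
  shows "inner a (map f [0..<d]) = (\<Sum>j<d. a ! j * f j)"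
  using assms by (simp add: inner_def)

lemma norm1_map_upt:
  "int (norm1 (map f [0..<d])) = (\<Sum>j<d. \<bar>f j\<bar>)"
  by (simp add: norm1_def sum_list_map_eq_sum_count2 atLeast0LessThan sum_list_sum_nth)

lemma norm1_map_upt_affine_le:
  fixes r y :: "nat \<Rightarrow> int"
  assumes "\<And>j. j < d \<Longrightarrow> 0 \<le> r j \<and> r j < L" and "\<And>j. j < d \<Longrightarrow> \<bar>y j\<bar> \<le> K"
  shows "int (norm1 (map (\<lambda>j. r j + L * y j) [0..<d])) \<le> int d * (L - 1) + L * (int d * K)"
proof -
  have "\<bar>r j + L * y j\<bar> \<le> (L - 1) + L * K" if "j < d" for j
  proof -
    have "0 \<le> L" using assms(1)[OF that] by simp
    then have "\<bar>L * y j\<bar> \<le> L * K"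
      using assms(2)[OF that] by (simp add: abs_mult mult_left_mono)
    then show ?thesis using assms(1)[OF that] by linarith
  qed
  then have "(\<Sum>j<d. \<bar>r j + L * y j\<bar>) \<le> (\<Sum>j<d. (L - 1) + L * K)"
    by (intro sum_mono) simp
  then show ?thesis by (simp add: norm1_map_upt algebra_simps)
qed

lemma small_congruent_solution_of_ineqs:
  fixes G :: "(int list \<times> int) set" and x0 :: "int list" and L s :: nat
  assumes "0 < L" and "length x0 = d"
    and G: "\<And>a g. (a, g) \<in> G \<Longrightarrow> length a = d \<and> (\<forall>j<d. \<bar>a ! j\<bar> \<le> int s) \<and> \<bar>g\<bar> \<le> int s + 1 \<and> g \<le> inner a x0"
  shows "\<exists>x. length x = d \<and> (\<forall>j<d. x ! j mod int L = x0 ! j mod int L) \<and> (\<forall>(a, g)\<in>G. g \<le> inner a x)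
           \<and> norm1 x \<le> L * (d + (2 + d + d ^ 2 * s) ^ (2 * d + 1))"
proof -
  define r where "r j = x0 ! j mod int L" for j
  define P where "P = (\<lambda>(a, g). ((!) a, g)) ` G"
  define K where "K = fact d * int s ^ (d - 1) * (int s + 1 + int d * int s + 2 * fact d * int s ^ d)"
  have r: "0 \<le> r j \<and> r j < int L" for j
    using \<open>0 < L\<close> by (simp add: r_def)
  have solves_iff: "solves_ineqs d P y \<longleftrightarrow> (\<forall>(a, g)\<in>G. g \<le> inner a (map y [0..<d]))" for y
    using G by (auto simp: solves_ineqs_def P_def inner_map_upt)
  have "x0 = map (\<lambda>j. r j + int L * (x0 ! j div int L)) [0..<d]"
    using \<open>length x0 = d\<close> by (intro nth_equalityI) (simp_all add: r_def)
  then have "solves_ineqs d P (\<lambda>j. r j + int L * (x0 ! j div int L))"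
    unfolding solves_iff using G by fastforce
  then have "\<exists>y. solves_ineqs d P (\<lambda>j. r j + int L * y j) \<and> (\<forall>j<d. \<bar>y j\<bar> \<le> K)"
    unfolding K_def using \<open>0 < L\<close> r G
    by (intro small_solution_of_ineqs_mod[where t = "int s + 1"]) (auto simp: P_def)
  then obtain y where y: "solves_ineqs d P (\<lambda>j. r j + int L * y j)" and y_bound: "\<And>j. j < d \<Longrightarrow> \<bar>y j\<bar> \<le> K"
    by blast
  define x where "x = map (\<lambda>j. r j + int L * y j) [0..<d]"
  have "int (norm1 x) \<le> int L * (int d + (2 + int d + int d ^ 2 * int s) ^ (2 * d + 1))"
  proof (cases "d = 0")
    case False
    have "int d * K \<le> (2 + int d + int d ^ 2 * int s) ^ (2 * d + 1)"
      unfolding K_def using False by (intro solution_bound_le_power) auto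
    then have "int L * (int d * K) \<le> int L * (2 + int d + int d ^ 2 * int s) ^ (2 * d + 1)"
      by (rule mult_left_mono) simp
    then show ?thesis
      using norm1_map_upt_affine_le[of d r "int L" y K] r y_bound unfolding x_def
      by (simp add: algebra_simps)
  qed (simp add: x_def norm1_def)
  then have "int (norm1 x) \<le> int (L * (d + (2 + d + d ^ 2 * s) ^ (2 * d + 1)))"
    by (simp only: of_nat_mult of_nat_add of_nat_power of_nat_numeral)
  then have "norm1 x \<le> L * (d + (2 + d + d ^ 2 * s) ^ (2 * d + 1))"
    by (simp only: of_nat_le_iff)
  moreover have "x ! j mod int L = x0 ! j mod int L" if "j < d" for j
    using that by (simp add: x_def r_def)
  moreover have "\<forall>(a, g)\<in>G. g \<le> inner a x"
    using y unfolding x_def solves_iff .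
  ultimately show ?thesis
    by (intro exI[of _ x]) (simp add: x_def)
qed

section \<open>Linear systems\<close>

lemma finite_atoms: "finite (atoms S)"
  by (induction S) auto

lemma holds_cong: "(\<And>ct. ct \<in> atoms S \<Longrightarrow> csat ct x = csat ct x') \<Longrightarrow> holds S x = holds S x'"
  by (induction S) auto

lemma inner_uminus: "inner (map uminus a) x = - inner a x"
  by (simp add: inner_def sum_negf)

lemma inner_mod_eq:
  assumes "\<And>j. j < length a \<Longrightarrow> x ! j mod m = y ! j mod m"
  shows "inner a x mod m = inner a y mod m"
proof -
  have "inner a x mod m = (\<Sum>j<length a. a ! j * x ! j mod m) mod m"
    unfolding inner_def by (simp only: mod_sum_eq)
  also have "\<dots> = (\<Sum>j<length a. a ! j * y ! j mod m) mod m"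
    using mod_mult_cong[OF refl assms] by simp
  also have "\<dots> = inner a y mod m"
    unfolding inner_def by (simp only: mod_sum_eq)
  finally show ?thesis .
qed

lemma vnorm_le:
  assumes "vnorm a \<le> s" and "j < length a"
  shows "\<bar>a ! j\<bar> \<le> int s"
proof -
  have "nat \<bar>a ! j\<bar> \<le> vnorm a"
    unfolding vnorm_def using assms(2) by (intro Max_ge) auto
  then show ?thesis using assms(1) by simp
qed

lemma cbound_sys_norm:
  assumes "ct \<in> atoms S"
  shows "cbound ct (sys_norm S)"
proof -
  define size where "size ct = (case ct of Eq a c \<Rightarrow> max (vnorm a) (nat \<bar>c\<bar>)
      | Geq a c \<Rightarrow> max (vnorm a) (nat \<bar>c\<bar>) | Dvd a c m \<Rightarrow> 0)" for ct
  have cbound_iff: "cbound ct s \<longleftrightarrow> size ct \<le> s" for ct s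
    by (cases ct) (simp_all add: size_def)
  have "\<forall>ct\<in>atoms S. cbound ct (Max (size ` atoms S \<union> {0}))"
    using finite_atoms by (simp add: cbound_iff)
  then have "\<forall>ct\<in>atoms S. cbound ct (sys_norm S)"
    unfolding sys_norm_def by (rule LeastI)
  then show ?thesis using assms by blast
qed

lemma modulus_dvd_sys_lcm: "ct \<in> atoms S \<Longrightarrow> modulus ct dvd sys_lcm S"
  by (simp add: sys_lcm_def)

lemma sys_lcm_pos:
  assumes "linsys d S"
  shows "0 < sys_lcm S"
proof -
  have "modulus ct \<noteq> 0" if "ct \<in> atoms S" for ct
    using assms that unfolding linsys_def by (cases ct) fastforce+
  then have "0 \<notin> modulus ` atoms S" by force
  then have "Lcm (modulus ` atoms S) \<noteq> 0"
    using finite_atoms[of S] by simp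
  then show ?thesis by (simp add: sys_lcm_def)
qed

text \<open>The inequalities \<open>\<langle>a, x\<rangle> \<ge> g\<close>, valid at \<open>x0\<close>, that force an equality or inequality
  atom to take the same truth value at \<open>x\<close> as at \<open>x0\<close>; a strict inequality is stated as a
  non-strict one with the constant shifted by one.\<close>
fun sign_ineqs :: "int list \<Rightarrow> constr \<Rightarrow> (int list \<times> int) list" where
  "sign_ineqs x0 (Eq a c) =
     (if inner a x0 = c then [(a, c), (map uminus a, - c)]
      else if c < inner a x0 then [(a, c + 1)] else [(map uminus a, 1 - c)])"
| "sign_ineqs x0 (Geq a c) = (if c \<le> inner a x0 then [(a, c)] else [(map uminus a, 1 - c)])"
| "sign_ineqs x0 (Dvd a c m) = []"

lemma sign_ineqs_hold: "(a, g) \<in> set (sign_ineqs x0 ct) \<Longrightarrow> g \<le> inner a x0"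
  by (cases ct) (auto simp: inner_uminus split: if_splits)

lemma csat_eq_if_sign_ineqs:
  assumes "\<And>a g. (a, g) \<in> set (sign_ineqs x0 ct) \<Longrightarrow> g \<le> inner a x" and "\<forall>a c m. ct \<noteq> Dvd a c m"
  shows "csat ct x = csat ct x0"
proof (cases ct)
  case (Eq a c)
  consider "inner a x0 = c" | "c < inner a x0" | "inner a x0 < c" by linarith
  then show ?thesis
  proof cases
    case 1
    then have "c \<le> inner a x" "- c \<le> inner (map uminus a) x"
      using assms(1)[of a c] assms(1)[of "map uminus a" "- c"] Eq by auto
    then show ?thesis using Eq 1 by (simp add: inner_uminus)
  next
    case 2
    then have "c + 1 \<le> inner a x" using assms(1)[of a "c + 1"] Eq by auto
    then show ?thesis using Eq 2 by simp
  next
    case 3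
    then have "1 - c \<le> inner (map uminus a) x" using assms(1)[of "map uminus a" "1 - c"] Eq by auto
    then show ?thesis using Eq 3 by (simp add: inner_uminus)
  qed
next
  case (Geq a c)
  show ?thesis
  proof (cases "c \<le> inner a x0")
    case True
    then have "c \<le> inner a x" using assms(1)[of a c] Geq by auto
    then show ?thesis using Geq True by simp
  next
    case False
    then have "1 - c \<le> inner (map uminus a) x" using assms(1)[of "map uminus a" "1 - c"] Geq by auto
    then show ?thesis using Geq False by (simp add: inner_uminus)
  qed
qed (use assms(2) in simp)

lemma sign_ineqs_bound:
  assumes "linsys d S" and "ct \<in> atoms S" and "(a, g) \<in> set (sign_ineqs x0 ct)"
  shows "length a = d \<and> (\<forall>j<d. \<bar>a ! j\<bar> \<le> int (sys_norm S)) \<and> \<bar>g\<bar> \<le> int (sys_norm S) + 1"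
proof -
  have "constr_wf d ct" and "cbound ct (sys_norm S)"
    using assms(1,2) cbound_sys_norm by (auto simp: linsys_def)
  then show ?thesis
    using assms(3) vnorm_le by (cases ct) (auto split: if_splits)
qed

lemma holds_eq_if_congruent_and_sign_ineqs:
  assumes "linsys d S"
    and congruent: "\<And>j. j < d \<Longrightarrow> x ! j mod int (sys_lcm S) = x0 ! j mod int (sys_lcm S)"
    and ineqs: "\<And>ct a g. ct \<in> atoms S \<Longrightarrow> (a, g) \<in> set (sign_ineqs x0 ct) \<Longrightarrow> g \<le> inner a x"
  shows "holds S x = holds S x0"
proof (rule holds_cong)
  fix ct assume ct: "ct \<in> atoms S"
  show "csat ct x = csat ct x0"
  proof (cases "\<exists>a c m. ct = Dvd a c m")
    case True
    then obtain a c m where Dvd: "ct = Dvd a c m" by blast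
    have "int m dvd int (sys_lcm S)"
      using modulus_dvd_sys_lcm[OF ct] Dvd by simp
    moreover have "constr_wf d ct"
      using assms(1) ct by (simp add: linsys_def)
    then have "length a = d" by (simp add: Dvd)
    ultimately have "inner a x mod int m = inner a x0 mod int m"
      using congruent by (intro inner_mod_eq) (metis mod_mod_cancel)
    then show ?thesis by (simp add: Dvd)
  next
    case False
    then show ?thesis
      using ineqs[OF ct] by (intro csat_eq_if_sign_ineqs) auto
  qed
qed

theorem theorem2:
  fixes d :: nat and S :: lsys
  assumes "linsys d S" and "satisfiable d S"
  shows "\<exists>x. is_solution d S x \<and>
           norm1 x \<le> sys_lcm S * (d + (2 + d + d^2 * sys_norm S) ^ (2*d+1))"
proof -
  obtain x0 where "length x0 = d" and "holds S x0"
    using assms(2) by (auto simp: satisfiable_def is_solution_def)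
  define G where "G = (\<Union>ct\<in>atoms S. set (sign_ineqs x0 ct))"
  have "length a = d \<and> (\<forall>j<d. \<bar>a ! j\<bar> \<le> int (sys_norm S)) \<and> \<bar>g\<bar> \<le> int (sys_norm S) + 1
      \<and> g \<le> inner a x0" if "(a, g) \<in> G" for a g
    using that sign_ineqs_bound[OF assms(1)] sign_ineqs_hold unfolding G_def by blast
  then obtain x where "length x = d"
    and "\<forall>j<d. x ! j mod int (sys_lcm S) = x0 ! j mod int (sys_lcm S)"
    and "\<forall>(a, g)\<in>G. g \<le> inner a x"
    and "norm1 x \<le> sys_lcm S * (d + (2 + d + d ^ 2 * sys_norm S) ^ (2 * d + 1))"
    using small_congruent_solution_of_ineqs[OF sys_lcm_pos[OF assms(1)] \<open>length x0 = d\<close>] by blast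
  moreover have "holds S x = holds S x0"
    using calculation assms(1) unfolding G_def
    by (intro holds_eq_if_congruent_and_sign_ineqs) auto
  ultimately show ?thesis
    using \<open>holds S x0\<close> by (auto simp: is_solution_def)
qed

end
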